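(* Let $n\ge2$, $\alpha\in[0,\pi/2)$, $A,B\in\Pi_{s,\alpha}^n$, $q\in\mathbb{C}$ with $0<|q|\le1$, and $0<t<1$. Then (a) $|q|^2\,w_q(\mathcal{L}(A,B))\le\sec^3(\alpha)\,\mathcal{L}(w_q(A),w_q(B))$; (b) $|q|^2\,w_q(\mathcal{H}_t(A,B))\le\sec^3(\alpha)\,\mathcal{H}_t(w_q(A),w_q(B))$.
   Context: For $\alpha\in[0,\pi/2)$, $S_\alpha=\{z\in\mathbb{C}:\operatorname{Re}z>0,\ |\operatorname{Im}z|\le\tan(\alpha)\operatorname{Re}z\}$, and $\Pi_{s,\alpha}^n$ is the set of $n\times n$ complex matrices whose numerical range is contained in $S_\alpha$. For accretive $X,Y$ and $s\in(0,1)$, the weighted geometric mean is $X\#_sY=\frac{\sin(s\pi)}{\pi}\int_0^\infty \lambda^{s-1}(X^{-1}+\lambda Y^{-1})^{-1}d\lambda$ (for positive scalars $a\#_sb=a^{1-s}b^s$). The logarithmic mean is $\mathcal{L}(X,Y)=\int_0^1X\#_sY\,ds$ and the Heinz mean is $\mathcal{H}_t(X,Y)=\frac{X\#_tY+X\#_{1-t}Y}{2}$; for positive scalars $\mathcal{L}(a,b)=\int_0^1a^{1-s}b^s\,ds$ and $\mathcal{H}_t(a,b)=\frac{a^{1-t}b^t+a^tb^{1-t}}{2}$. $w_q(X)=\sup\{|\langle Xx,y\rangle|:\|x\|=\|y\|=1,\ \langle x,y\rangle=q\}$. *)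

theory Defs
  imports "HOL-Analysis.Analysis"
begin

definition cinner :: "complex^'n \<Rightarrow> complex^'n \<Rightarrow> complex" where
  "cinner x y = (\<Sum>i\<in>UNIV. x $ i * cnj (y $ i))"

definition numerical_range :: "complex^'n^'n \<Rightarrow> complex set" where
  "numerical_range X = {cinner (X *v x) x | x. norm x = 1}"

definition sector :: "real \<Rightarrow> complex set" where
  "sector \<alpha> = {z. Re z > 0 \<and> \<bar>Im z\<bar> \<le> tan \<alpha> * Re z}"

definition Pi_sa :: "real \<Rightarrow> (complex^'n^'n) set" where
  "Pi_sa \<alpha> = {X. numerical_range X \<subseteq> sector \<alpha>}"

text \<open>Weighted geometric mean of accretive matrices (integral representation).\<close>
definition wgmean :: "real \<Rightarrow> complex^'n^'n \<Rightarrow> complex^'n^'n \<Rightarrow> complex^'n^'n" where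
  "wgmean s X Y = (sin (s * pi) / pi) *\<^sub>R
     integral {0<..} (\<lambda>l::real. (l powr (s - 1)) *\<^sub>R
        matrix_inv (matrix_inv X + l *\<^sub>R matrix_inv Y))"

definition log_mean :: "complex^'n^'n \<Rightarrow> complex^'n^'n \<Rightarrow> complex^'n^'n" where
  "log_mean X Y = integral {0..1} (\<lambda>s. wgmean s X Y)"

definition heinz_mean :: "real \<Rightarrow> complex^'n^'n \<Rightarrow> complex^'n^'n \<Rightarrow> complex^'n^'n" where
  "heinz_mean t X Y = (1/2::real) *\<^sub>R (wgmean t X Y + wgmean (1 - t) X Y)"

definition log_mean_real :: "real \<Rightarrow> real \<Rightarrow> real" where
  "log_mean_real a b = integral {0..1} (\<lambda>s. a powr (1 - s) * b powr s)"

definition heinz_mean_real :: "real \<Rightarrow> real \<Rightarrow> real \<Rightarrow> real" where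
  "heinz_mean_real t a b = (a powr (1 - t) * b powr t + a powr t * b powr (1 - t)) / 2"

definition q_numrad :: "complex \<Rightarrow> complex^'n^'n \<Rightarrow> real" where
  "q_numrad q X = Sup {cmod (cinner (X *v x) y) | x y. norm x = 1 \<and> norm y = 1 \<and> cinner x y = q}"

end

theory Submission
  imports Defs
begin

text \<open>
  If the numerical range of A lies in the sector S_alpha, the form <Au, v> satisfies the
  Cauchy-Schwarz inequality |<Au, v>|^2 <= sec^2 alpha Re <Au, u> Re <Av, v>. Combined with
  |<Ax, x>| <= w(A) |x|^2 it gives Re <A^-1 y, y> >= cos^2 alpha |y|^2 / w(A), so the resolvent
  (A^-1 + l B^-1)^-1 in the integral representation of A #_s B has norm at most
  sec^2 alpha w(A) w(B) / (w(B) + l w(A)), and a Beta integral yields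
  |<(A #_s B) x, y>| <= sec^2 alpha w(A)^(1-s) w(B)^s |x| |y|.
  For n >= 2 and a unit vector v, both vectors conj q v +- sqrt (1 - |q|^2) z with z a unit
  vector orthogonal to v have inner product q with v; averaging over them gives
  |q| w(M) <= w_q(M). Replacing w by w_q / |q| and integrating over s, resp. averaging s = t and
  s = 1 - t, bounds |q| w_q of the logarithmic and Heinz means by sec^2 alpha times the
  corresponding scalar means of w_q(A) and w_q(B), which is sharper than the claim because
  |q| <= 1 <= sec alpha.
\<close>

section \<open>Beta-type integrals\<close>

lemma Beta_complement: "Beta s (1 - s) = pi / sin (pi * s)"
proof -
  have "Gamma (complex_of_real s) * Gamma (1 - complex_of_real s)
          = of_real pi / sin (of_real pi * of_real s)"
    by (rule Gamma_reflection_complex)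
  then have "complex_of_real (Gamma s * Gamma (1 - s)) = complex_of_real (pi / sin (pi * s))"
    by (metis Gamma_complex_of_real of_real_1 of_real_diff of_real_mult sin_of_real of_real_divide)
  then have "Gamma s * Gamma (1 - s) = pi / sin (pi * s)"
    by (simp only: of_real_eq_iff)
  then show ?thesis
    by (simp add: Beta_altdef)
qed

lemma Beta_complement_set_integral:
  assumes "0 < s" "s < 1"
  shows "set_integrable lborel {0<..<1} (\<lambda>t. t powr (s - 1) * (1 - t) powr (- s))"
    and "(LINT t:{0<..<1}|lborel. t powr (s - 1) * (1 - t) powr (- s)) = pi / sin (s * pi)"
proof -
  show int: "set_integrable lborel {0<..<1} (\<lambda>t. t powr (s - 1) * (1 - t) powr (- s))"
  proof -
    have "set_integrable lborel {0<..<1} (\<lambda>t. t powr (s - 1) * (1 - t) powr ((1 - s) - 1))"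
      by (rule set_integrable_subset[OF integrable_Beta]) (use assms in auto)
    then show ?thesis
      by simp
  qed
  have "(LINT t:{0<..<1}|lborel. t powr (s - 1) * (1 - t) powr (- s))
      = integral {0..1} (\<lambda>t. t powr (s - 1) * (1 - t) powr (- s))"
    using set_borel_integral_eq_integral(2)[OF int] by (simp add: integral_open_interval_real)
  also have "\<dots> = pi / sin (s * pi)"
    using has_integral_Beta_real[of s "1 - s"] assms
    by (simp add: integral_unique Beta_complement mult.commute)
  finally show "(LINT t:{0<..<1}|lborel. t powr (s - 1) * (1 - t) powr (- s)) = pi / sin (s * pi)" .
qed

lemma has_integral_Ioi_substitution:
  fixes f :: "real \<Rightarrow> real" and k :: real
  defines "g \<equiv> \<lambda>t. k * t / (1 - t)"
  assumes k: "0 < k"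
    and cont: "\<And>l. 0 < l \<Longrightarrow> isCont f l" and nonneg: "\<And>l. 0 < l \<Longrightarrow> 0 \<le> f l"
    and int: "set_integrable lborel {0<..<1} (\<lambda>t. f (g t) * (k / (1 - t)\<^sup>2))"
  shows "(f has_integral (LINT t:{0<..<1}|lborel. f (g t) * (k / (1 - t)\<^sup>2))) {0<..}"
proof -
  have g_pos: "0 < g t" if "0 < t" "t < 1" for t
    using that k by (simp add: g_def)
  have lim0: "((ereal \<circ> g \<circ> real_of_ereal) \<longlongrightarrow> 0) (at_right 0)"
  proof -
    have "(g \<longlongrightarrow> g 0) (at_right 0)"
      unfolding g_def by (intro tendsto_intros) auto
    then show ?thesis
      by (simp add: g_def zero_ereal_def ereal_tendsto_simps)
  qed
  have lim1: "((ereal \<circ> g \<circ> real_of_ereal) \<longlongrightarrow> \<infinity>) (at_left 1)"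
  proof -
    have "eventually (\<lambda>t::real. 0 < 1 - t) (at_left 1)"
      using eventually_at_left_real[of 0 "1::real"] by (auto elim: eventually_mono)
    then have "LIM t at_left (1::real). g t :> at_top"
      unfolding g_def using k by (intro LIM_at_top_divide tendsto_eq_intros) auto
    then show ?thesis
      by (simp add: one_ereal_def ereal_tendsto_simps)
  qed
  have deriv: "DERIV g t :> k / (1 - t)\<^sup>2" if "0 < t" "t < 1" for t
    using that unfolding g_def
    by (auto intro!: derivative_eq_intros simp: field_simps power2_eq_square)
  have "einterval 0 1 = {0::real<..<1}"
    by (simp add: zero_ereal_def one_ereal_def)
  then have "set_integrable lborel (einterval 0 \<infinity>) f \<and>
      (LBINT l=0..\<infinity>. f l) = (LBINT t=0..1. f (g t) * (k / (1 - t)\<^sup>2))"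
    using interval_integral_substitution_nonneg[where f = f and g = g and g' = "\<lambda>t. k / (1 - t)\<^sup>2",
        OF _ _ _ _ _ _ lim0 lim1] int cont nonneg g_pos deriv k
    by (auto intro!: continuous_intros simp: zero_ereal_def one_ereal_def)
  then have "set_integrable lborel {0<..} f"
    and "(LINT l:{0<..}|lborel. f l) = (LINT t:{0<..<1}|lborel. f (g t) * (k / (1 - t)\<^sup>2))"
    by (simp_all add: interval_integral_Ioi interval_integral_Ioo zero_ereal_def one_ereal_def)
  then show ?thesis
    using set_borel_integral_eq_integral by (metis has_integral_integral)
qed

lemma powr_resolvent_substitution:
  fixes s c d t :: real
  assumes "0 < c" "0 < d" "0 < t" "t < 1"
  defines "k \<equiv> d / c"
  shows "(k * t / (1 - t)) powr (s - 1) * (c * d / (d + k * t / (1 - t) * c)) * (k / (1 - t)\<^sup>2)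
           = (k powr s * c) * (t powr (s - 1) * (1 - t) powr (- s))"
proof -
  have t1: "0 < 1 - t" using assms by simp
  have k: "0 < k" using assms by (simp add: k_def)
  have e1: "c * d / (d + k * t / (1 - t) * c) = c * (1 - t)"
    using assms t1 by (simp add: k_def field_simps)
  have e2: "(k * t / (1 - t)) powr (s - 1) = k powr (s - 1) * t powr (s - 1) / (1 - t) powr (s - 1)"
    using k assms t1 by (simp add: powr_divide powr_mult)
  have "(k * t / (1 - t)) powr (s - 1) * (c * d / (d + k * t / (1 - t) * c)) * (k / (1 - t)\<^sup>2)
      = (k powr (s - 1) * k) * c * t powr (s - 1) / ((1 - t) powr (s - 1) * (1 - t))"
  proof -
    have "K * T / P * (c * u) * (k / u\<^sup>2) = (K * k) * c * T / (P * u)"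
      if "u \<noteq> 0" "P \<noteq> 0" for K T P u :: real
      using that by (simp add: field_simps power2_eq_square)
    then show ?thesis
      unfolding e1 e2 using t1 by simp
  qed
  also have "k powr (s - 1) * k = k powr s"
    using k by (simp add: powr_diff)
  also have "(1 - t) powr (s - 1) * (1 - t) = (1 - t) powr s"
    using t1 by (simp add: powr_diff)
  finally show ?thesis
    using t1 by (simp add: powr_minus divide_inverse)
qed

lemma has_integral_powr_resolvent:
  fixes s c d :: real
  assumes s: "0 < s" "s < 1" and c: "0 < c" and d: "0 < d"
  shows "((\<lambda>l. l powr (s - 1) * (c * d / (d + l * c))) has_integral
           pi / sin (s * pi) * (c powr (1 - s) * d powr s)) {0<..}"
proof -
  txt \<open>The substitution l = (d / c) t / (1 - t) turns the integrand into a multiple of the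
    Beta integrand for B(s, 1 - s).\<close>
  define k where "k = d / c"
  define beta where "beta t = t powr (s - 1) * (1 - t) powr (- s)" for t :: real
  note beta_int = Beta_complement_set_integral(1)[OF s, folded beta_def]
  note beta_val = Beta_complement_set_integral(2)[OF s, folded beta_def]
  have denom_pos: "0 < d + l * c" if "0 < l" for l
    using c d that by (intro add_pos_pos mult_pos_pos)
  define h where
    "h t = (k * t / (1 - t)) powr (s - 1) * (c * d / (d + k * t / (1 - t) * c)) * (k / (1 - t)\<^sup>2)"
    for t
  have subst: "h t = (k powr s * c) * beta t" if "t \<in> {0<..<1}" for t
    using powr_resolvent_substitution[OF c d] that unfolding h_def beta_def k_def by simp
  have h_int: "set_integrable lborel {0<..<1} h"
    by (subst set_integrable_cong[OF refl refl subst])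
      (auto intro: set_integrable_mult_right[OF beta_int])
  have "(LINT t:{0<..<1}|lborel. h t) = k powr s * c * (pi / sin (s * pi))"
    by (simp add: set_lebesgue_integral_cong[of _ _ h "\<lambda>t. (k powr s * c) * beta t"] subst beta_val)
  moreover have "((\<lambda>l. l powr (s - 1) * (c * d / (d + l * c))) has_integral
      (LINT t:{0<..<1}|lborel. h t)) {0<..}"
    unfolding h_def
  proof (rule has_integral_Ioi_substitution)
    show "set_integrable lborel {0<..<1} (\<lambda>t.
        (k * t / (1 - t)) powr (s - 1) * (c * d / (d + k * t / (1 - t) * c)) * (k / (1 - t)\<^sup>2))"
      using h_int unfolding h_def .
    show "isCont (\<lambda>l. l powr (s - 1) * (c * d / (d + l * c))) l" if "0 < l" for l
      using that denom_pos[OF that] by (auto intro!: continuous_intros)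
  qed (use c d in \<open>simp_all add: k_def\<close>)
  moreover have "k powr s * c = c powr (1 - s) * d powr s"
    using c d by (simp add: k_def powr_divide powr_diff)
  ultimately show ?thesis
    using beta_val by (simp add: mult_ac)
qed

section \<open>Sesquilinear forms on complex vectors\<close>

lemma cinner_add_left: "cinner (x + y) z = cinner x z + cinner y z"
  unfolding cinner_def by (simp add: sum.distrib ring_distribs)

lemma cinner_add_right: "cinner x (y + z) = cinner x y + cinner x z"
  unfolding cinner_def by (simp add: sum.distrib ring_distribs)

lemma cinner_diff_left: "cinner (x - y) z = cinner x z - cinner y z"
  unfolding cinner_def by (simp add: sum_subtractf ring_distribs)

lemma cinner_diff_right: "cinner x (y - z) = cinner x y - cinner x z"
  unfolding cinner_def by (simp add: sum_subtractf ring_distribs)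

lemma cinner_zero_left [simp]: "cinner 0 y = 0"
  by (simp add: cinner_def)

lemma cinner_scale_left: "cinner (c *s x) y = c * cinner x y"
  unfolding cinner_def by (simp add: sum_distrib_left mult.assoc)

lemma cinner_scale_right: "cinner x (c *s y) = cnj c * cinner x y"
  unfolding cinner_def by (simp add: sum_distrib_left mult_ac)

lemma scaleR_eq_scale_of_real: "r *\<^sub>R (x :: complex^'n) = complex_of_real r *s x"
  unfolding vec_eq_iff vector_scaleR_component vector_scalar_mult_def
  by (simp add: scaleR_conv_of_real)

lemma cinner_scaleR_left: "cinner (r *\<^sub>R x) y = of_real r * cinner x y"
  unfolding scaleR_eq_scale_of_real by (rule cinner_scale_left)

lemma cinner_scaleR_right: "cinner x (r *\<^sub>R y) = of_real r * cinner x y"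
  unfolding scaleR_eq_scale_of_real by (simp add: cinner_scale_right)

lemma cnj_cinner: "cnj (cinner x y) = cinner y x"
  unfolding cinner_def by (simp add: mult.commute)

lemma cinner_self: "cinner x x = complex_of_real ((norm x)\<^sup>2)"
proof -
  have "(norm x)\<^sup>2 = (\<Sum>i\<in>UNIV. (cmod (x $ i))\<^sup>2)"
    unfolding norm_vec_def L2_set_def by (simp add: sum_nonneg)
  moreover have "z * cnj z = (complex_of_real (cmod z))\<^sup>2" for z
    using complex_norm_square[of z] by simp
  ultimately show ?thesis
    unfolding cinner_def by simp
qed

lemma norm_cinner_le: "cmod (cinner x y) \<le> norm x * norm y"
proof -
  have "cmod (cinner x y) \<le> (\<Sum>i\<in>UNIV. cmod (x $ i * cnj (y $ i)))"
    unfolding cinner_def by (rule norm_sum)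
  also have "\<dots> = (\<Sum>i\<in>UNIV. \<bar>cmod (x $ i)\<bar> * \<bar>cmod (y $ i)\<bar>)"
    by (simp add: norm_mult)
  also have "\<dots> \<le> L2_set (\<lambda>i. cmod (x $ i)) UNIV * L2_set (\<lambda>i. cmod (y $ i)) UNIV"
    by (rule L2_set_mult_ineq)
  finally show ?thesis
    by (simp add: norm_vec_def)
qed

lemma cinner_axis_left: "cinner (axis i 1) y = cnj (y $ i)"
proof -
  have "cinner (axis i 1) y = (\<Sum>k\<in>UNIV. if k = i then cnj (y $ k) else 0)"
    unfolding cinner_def axis_def by (rule sum.cong) auto
  then show ?thesis
    by simp
qed

lemma norm_axis_1_complex: "norm (axis i (1::complex) :: complex^'n) = 1"
proof -
  have "cinner (axis i (1::complex)) (axis i 1 :: complex^'n) = 1"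
    by (simp only: cinner_axis_left) (simp add: axis_def)
  then have "(norm (axis i (1::complex) :: complex^'n))\<^sup>2 = 1"
    by (simp add: cinner_self)
  then show ?thesis
    using norm_ge_zero[of "axis i (1::complex) :: complex^'n"] by (simp add: power2_eq_1_iff)
qed

definition sesquilinear :: "(complex^'n \<Rightarrow> complex^'n \<Rightarrow> complex) \<Rightarrow> bool" where
  "sesquilinear g \<longleftrightarrow>
     (\<forall>x y z. g (x - y) z = g x z - g y z) \<and> (\<forall>x y z. g x (y - z) = g x y - g x z) \<and>
     (\<forall>c x y. g (c *s x) y = c * g x y) \<and> (\<forall>c x y. g x (c *s y) = cnj c * g x y)"

lemma sesquilinearD:
  assumes "sesquilinear g"
  shows "g (x - y) z = g x z - g y z" "g x (y - z) = g x y - g x z"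
    and "g (c *s x) y = c * g x y" "g x (c *s y) = cnj c * g x y"
  using assms unfolding sesquilinear_def by blast+

lemma sesquilinear_matrix_form: "sesquilinear (\<lambda>u v. cinner (A *v u) v)"
  unfolding sesquilinear_def
  by (simp add: matrix_vector_mult_diff_distrib cinner_diff_left cinner_diff_right
      vector_scalar_commute cinner_scale_left cinner_scale_right)

lemma sesquilinear_combination:
  assumes "sesquilinear g"
  shows "sesquilinear (\<lambda>u v. a * g u v + b * cnj (g v u))"
  unfolding sesquilinear_def
  by (intro conjI allI;
      simp only: sesquilinearD[OF assms] complex_cnj_diff complex_cnj_mult complex_cnj_cnj;
      simp add: algebra_simps)

lemma sesquilinear_expand:
  assumes "sesquilinear g"
  shows "g (u - t *s v) (u - t *s v) = g u u - cnj t * g u v - t * g v u + t * cnj t * g v v"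
  by (simp only: sesquilinearD[OF assms]; simp add: algebra_simps)

lemma discriminant_le_of_quadratic_nonneg:
  fixes a b c :: real
  assumes nonneg: "\<And>l. 0 \<le> a - 2 * b * l + c * l\<^sup>2" and "0 \<le> c"
  shows "b\<^sup>2 \<le> a * c"
proof (cases "c = 0")
  case True
  have "b = 0"
  proof (rule ccontr)
    assume "b \<noteq> 0"
    then have "a - 2 * b * ((a + 1) / (2 * b)) = -1"
      by (simp add: field_simps)
    then show False
      using nonneg[of "(a + 1) / (2 * b)"] True by simp
  qed
  then show ?thesis
    using True by simp
next
  case False
  then have "0 < c"
    using \<open>0 \<le> c\<close> by simp
  have "0 \<le> a - 2 * b * (b / c) + c * (b / c)\<^sup>2"
    by (rule nonneg)
  also have "\<dots> = (a * c - b\<^sup>2) / c"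
    using \<open>0 < c\<close> by (simp add: field_simps power2_eq_square)
  finally show ?thesis
    using \<open>0 < c\<close> by (simp add: zero_le_divide_iff)
qed

lemma hermitian_form_cauchy_schwarz:
  assumes "sesquilinear g" and herm: "\<And>u v. g v u = cnj (g u v)" and psd: "\<And>x. 0 \<le> Re (g x x)"
  shows "(cmod (g u v))\<^sup>2 \<le> Re (g u u) * Re (g v v)"
proof -
  define z where "z = g u v"
  have real_diag: "g x x = complex_of_real (Re (g x x))" for x
    using herm[of x x] by (simp add: complex_eq_iff)
  have "0 \<le> Re (g u u) - 2 * (cmod z)\<^sup>2 * l + ((cmod z)\<^sup>2 * Re (g v v)) * l\<^sup>2" for l
  proof -
    define t where "t = complex_of_real l * z"
    have "g (u - t *s v) (u - t *s v) = g u u - cnj t * z - t * cnj z + t * cnj t * g v v"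
      using sesquilinear_expand[OF assms(1), of u t v] herm[of u v] unfolding z_def by simp
    also have "cnj t * z = complex_of_real (l * (cmod z)\<^sup>2)"
      unfolding t_def using complex_norm_square[of z] by (simp add: mult_ac)
    also have "t * cnj z = complex_of_real (l * (cmod z)\<^sup>2)"
      unfolding t_def using complex_norm_square[of z] by (simp add: mult_ac)
    also have "t * cnj t = complex_of_real (l\<^sup>2 * (cmod z)\<^sup>2)"
      unfolding t_def using complex_norm_square[of z] by (simp add: power2_eq_square mult_ac)
    finally have "Re (g (u - t *s v) (u - t *s v))
        = Re (g u u) - 2 * (cmod z)\<^sup>2 * l + ((cmod z)\<^sup>2 * Re (g v v)) * l\<^sup>2"
      by (subst (asm) real_diag[of v]) simp
    then show ?thesis
      using psd[of "u - t *s v"] by simp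
  qed
  then have "((cmod z)\<^sup>2)\<^sup>2 \<le> Re (g u u) * ((cmod z)\<^sup>2 * Re (g v v))"
    using psd[of v] by (intro discriminant_le_of_quadratic_nonneg) auto
  then show ?thesis
    using psd[of u] psd[of v] by (cases "z = 0") (simp_all add: z_def power2_eq_square)
qed

lemma hermitian_combination_cauchy_schwarz:
  assumes "sesquilinear a" and psd: "\<And>x. 0 \<le> Re (w * a x x + cnj w * cnj (a x x))"
  shows "(cmod (w * a u v + cnj w * cnj (a v u)))\<^sup>2
           \<le> Re (w * a u u + cnj w * cnj (a u u)) * Re (w * a v v + cnj w * cnj (a v v))"
  using psd by (intro hermitian_form_cauchy_schwarz sesquilinear_combination assms(1)) auto

lemma real_form_cauchy_schwarz:
  assumes a: "sesquilinear a" and real: "\<And>x. Im (a x x) = 0" and psd: "\<And>x. 0 \<le> Re (a x x)"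
  shows "(cmod (a u v))\<^sup>2 \<le> Re (a u u) * Re (a v v)"
proof -
  txt \<open>a = H + i K with Hermitian H, K; the diagonal of K is Im a = 0, so K vanishes.\<close>
  define H where "H u v = (1/2) * a u v + cnj (1/2) * cnj (a v u)" for u v
  define K where "K u v = (- \<i>/2) * a u v + cnj (- \<i>/2) * cnj (a v u)" for u v
  have "(cmod (K u v))\<^sup>2 \<le> Re (K u u) * Re (K v v)"
    unfolding K_def using real by (intro hermitian_combination_cauchy_schwarz a) simp
  then have "K u v = 0"
    using real by (simp add: K_def)
  moreover have "a u v = H u v + \<i> * K u v"
    unfolding H_def K_def by (simp add: algebra_simps)
  moreover have "(cmod (H u v))\<^sup>2 \<le> Re (H u u) * Re (H v v)"
    unfolding H_def using psd by (intro hermitian_combination_cauchy_schwarz a) simp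
  ultimately show ?thesis
    by (simp add: H_def)
qed

lemma power2_add_le_mult_add:
  fixes X Y p1 p2 q1 q2 :: real
  assumes "0 \<le> X" "0 \<le> Y" "0 \<le> p1" "0 \<le> p2" "0 \<le> q1" "0 \<le> q2"
    and "X\<^sup>2 \<le> p1 * q1" "Y\<^sup>2 \<le> p2 * q2"
  shows "(X + Y)\<^sup>2 \<le> (p1 + p2) * (q1 + q2)"
proof -
  have "X \<le> sqrt p1 * sqrt q1" "Y \<le> sqrt p2 * sqrt q2"
    using assms real_le_rsqrt[of X "p1 * q1"] real_le_rsqrt[of Y "p2 * q2"]
    by (simp_all add: real_sqrt_mult)
  then have "(X + Y)\<^sup>2 \<le> (sqrt p1 * sqrt q1 + sqrt p2 * sqrt q2)\<^sup>2"
    using assms by (intro power_mono) auto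
  also have "\<dots> \<le> (sqrt p1 * sqrt q1 + sqrt p2 * sqrt q2)\<^sup>2 + (sqrt p1 * sqrt q2 - sqrt p2 * sqrt q1)\<^sup>2"
    by simp
  also have "\<dots> = (p1 + p2) * (q1 + q2)"
    using assms by (simp add: power2_eq_square algebra_simps)
  finally show ?thesis .
qed

lemma sectorial_form_cauchy_schwarz:
  assumes a: "sesquilinear a" and "0 < \<tau>" and sector: "\<And>x. \<bar>Im (a x x)\<bar> \<le> \<tau> * Re (a x x)"
  shows "(cmod (a u v))\<^sup>2 \<le> (1 + \<tau>\<^sup>2) * (Re (a u u) * Re (a v v))"
proof -
  txt \<open>P and N are positive semidefinite Hermitian forms with diagonals tau Re a -+ Im a, and
    a = c P + conj c N with |c|^2 = (1 + tau^2) / (4 tau^2).\<close>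
  define w where "w = complex_of_real \<tau> / 2 + \<i> / 2"
  define P where "P u v = w * a u v + cnj w * cnj (a v u)" for u v
  define N where "N u v = cnj w * a u v + cnj (cnj w) * cnj (a v u)" for u v
  define c where "c = 1 / (2 * \<tau>) - \<i>/2"
  have P_diag: "Re (P x x) = \<tau> * Re (a x x) - Im (a x x)"
    and N_diag: "Re (N x x) = \<tau> * Re (a x x) + Im (a x x)" for x
    by (simp_all add: P_def N_def w_def)
  have psd: "0 \<le> Re (P x x)" "0 \<le> Re (N x x)" for x
    using sector[of x] by (simp_all add: P_diag N_diag abs_le_iff)
  have P_cs: "(cmod (P u v))\<^sup>2 \<le> Re (P u u) * Re (P v v)"
    and N_cs: "(cmod (N u v))\<^sup>2 \<le> Re (N u u) * Re (N v v)" for u v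
    unfolding P_def N_def
    by (rule hermitian_combination_cauchy_schwarz[OF a psd(1)[unfolded P_def]],
        rule hermitian_combination_cauchy_schwarz[OF a psd(2)[unfolded N_def]])
  have c_norm: "(cmod c)\<^sup>2 = (1 + \<tau>\<^sup>2) / (4 * \<tau>\<^sup>2)"
    unfolding c_def cmod_power2 using \<open>0 < \<tau>\<close> by (simp add: field_simps power2_eq_square)
  have "a u v = c * P u v + cnj c * N u v"
    using \<open>0 < \<tau>\<close> by (simp add: P_def N_def w_def c_def field_simps complex_eq_iff)
  then have "cmod (a u v) \<le> cmod c * (cmod (P u v) + cmod (N u v))"
    using norm_triangle_ineq[of "c * P u v" "cnj c * N u v"] by (simp add: norm_mult distrib_left)
  then have "(cmod (a u v))\<^sup>2 \<le> (cmod c)\<^sup>2 * (cmod (P u v) + cmod (N u v))\<^sup>2"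
    by (simp add: power_mono power_mult_distrib flip: power_mult_distrib)
  also have "\<dots> \<le> (cmod c)\<^sup>2 * ((Re (P u u) + Re (N u u)) * (Re (P v v) + Re (N v v)))"
    using sector[of u] sector[of v]
    by (intro mult_left_mono power2_add_le_mult_add P_cs N_cs) (auto simp: P_diag N_diag)
  also have "\<dots> = ((cmod c)\<^sup>2 * (4 * \<tau>\<^sup>2)) * (Re (a u u) * Re (a v v))"
    by (simp add: P_diag N_diag power2_eq_square algebra_simps)
  also have "(cmod c)\<^sup>2 * (4 * \<tau>\<^sup>2) = 1 + \<tau>\<^sup>2"
    using \<open>0 < \<tau>\<close> by (simp add: c_norm)
  finally show ?thesis .
qed

section \<open>Matrices with numerical range in a sector\<close>

lemma matrix_vector_mul_matrix_inv:
  assumes "invertible M"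
  shows "M *v (matrix_inv M *v y) = y"
proof -
  have "\<exists>M'. M ** M' = mat 1 \<and> M' ** M = mat 1"
    using assms unfolding invertible_def by blast
  then have "M ** matrix_inv M = mat 1"
    unfolding matrix_inv_def by (rule someI2_ex) blast
  then show ?thesis
    by (simp add: matrix_vector_mul_assoc)
qed

lemma invertible_if_ker_zero:
  fixes M :: "'a::field^'n^'n"
  assumes "\<And>y. M *v y = 0 \<Longrightarrow> y = 0"
  shows "invertible M"
  using assms matrix_left_invertible_ker invertible_left_inverse by blast

lemma scaleR_matrix_vector_mult:
  fixes M :: "'a::real_algebra_1^'n^'m"
  shows "(r *\<^sub>R M) *v x = r *\<^sub>R (M *v x)"
  by (simp add: vec_eq_iff matrix_vector_mult_def scaleR_sum_right)

lemma matrix_form_scaleR: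
  "cinner (A *v (r *\<^sub>R x)) (r *\<^sub>R x) = of_real (r * r) * cinner (A *v x) x"
  unfolding scaleR_eq_scale_of_real vector_scalar_commute
  by (simp add: cinner_scale_left cinner_scale_right)

lemma Pi_sa_formD:
  assumes "A \<in> Pi_sa \<alpha>"
  shows Pi_sa_form_nonneg: "0 \<le> Re (cinner (A *v x) x)"
    and Pi_sa_form_Im_le: "\<bar>Im (cinner (A *v x) x)\<bar> \<le> tan \<alpha> * Re (cinner (A *v x) x)"
    and Pi_sa_form_pos: "x \<noteq> 0 \<Longrightarrow> 0 < Re (cinner (A *v x) x)"
proof -
  have sector: "0 < Re (cinner (A *v x) x) \<and>
      \<bar>Im (cinner (A *v x) x)\<bar> \<le> tan \<alpha> * Re (cinner (A *v x) x)" if "x \<noteq> 0" for x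
  proof -
    define r where "r = 1 / norm x"
    have "0 < r"
      using that by (simp add: r_def)
    have "cinner (A *v (r *\<^sub>R x)) (r *\<^sub>R x) \<in> numerical_range A"
      using that unfolding numerical_range_def r_def by force
    then have "cinner (A *v (r *\<^sub>R x)) (r *\<^sub>R x) \<in> sector \<alpha>"
      using assms unfolding Pi_sa_def by blast
    then have "0 < (r * r) * Re (cinner (A *v x) x) \<and>
        (r * r) * \<bar>Im (cinner (A *v x) x)\<bar> \<le> (r * r) * (tan \<alpha> * Re (cinner (A *v x) x))"
      using \<open>0 < r\<close> by (simp add: matrix_form_scaleR sector_def abs_mult mult_ac)
    then show ?thesis
      using \<open>0 < r\<close> by (simp add: zero_less_mult_iff)
  qed
  show "0 \<le> Re (cinner (A *v x) x)"
    using sector[of x] by (cases "x = 0") auto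
  show "\<bar>Im (cinner (A *v x) x)\<bar> \<le> tan \<alpha> * Re (cinner (A *v x) x)"
    using sector[of x] by (cases "x = 0") auto
  show "x \<noteq> 0 \<Longrightarrow> 0 < Re (cinner (A *v x) x)"
    using sector[of x] by auto
qed

lemma Pi_sa_invertible:
  assumes "A \<in> Pi_sa \<alpha>"
  shows "invertible A"
proof (rule invertible_if_ker_zero)
  fix y
  assume "A *v y = 0"
  then show "y = 0"
    using Pi_sa_form_pos[OF assms, of y] by auto
qed

lemma Pi_sa_cauchy_schwarz:
  assumes A: "A \<in> Pi_sa \<alpha>" and "0 \<le> \<alpha>" "\<alpha> < pi / 2"
  shows "(cmod (cinner (A *v u) v))\<^sup>2
           \<le> (1 / cos \<alpha>)\<^sup>2 * (Re (cinner (A *v u) u) * Re (cinner (A *v v) v))"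
proof -
  have "0 < cos \<alpha>"
    using assms by (intro cos_gt_zero_pi) auto
  have "0 \<le> tan \<alpha>"
    using assms \<open>0 < cos \<alpha>\<close> sin_ge_zero[of \<alpha>] by (simp add: tan_def)
  show ?thesis
  proof (cases "tan \<alpha> = 0")
    case True
    have "(cmod (cinner (A *v u) v))\<^sup>2 \<le> Re (cinner (A *v u) u) * Re (cinner (A *v v) v)"
      by (rule real_form_cauchy_schwarz[OF sesquilinear_matrix_form])
        (use Pi_sa_form_Im_le[OF A] True Pi_sa_form_nonneg[OF A] in auto)
    also have "\<dots> = 1 * (Re (cinner (A *v u) u) * Re (cinner (A *v v) v))"
      by simp
    also have "\<dots> \<le> (1 / cos \<alpha>)\<^sup>2 * (Re (cinner (A *v u) u) * Re (cinner (A *v v) v))"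
      using \<open>0 < cos \<alpha>\<close> Pi_sa_form_nonneg[OF A]
      by (intro mult_right_mono) (simp_all add: field_simps power_le_one)
    finally show ?thesis .
  next
    case False
    then have "(cmod (cinner (A *v u) v))\<^sup>2
        \<le> (1 + (tan \<alpha>)\<^sup>2) * (Re (cinner (A *v u) u) * Re (cinner (A *v v) v))"
      using \<open>0 \<le> tan \<alpha>\<close> Pi_sa_form_Im_le[OF A]
      by (intro sectorial_form_cauchy_schwarz sesquilinear_matrix_form) auto
    then show ?thesis
      using \<open>0 < cos \<alpha>\<close> by (simp add: tan_sec divide_inverse)
  qed
qed

lemma Pi_sa_norm_sq_le:
  assumes A: "A \<in> Pi_sa \<alpha>" and "0 \<le> \<alpha>" "\<alpha> < pi / 2"
    and W: "\<And>x. cmod (cinner (A *v x) x) \<le> W * (norm x)\<^sup>2" and "0 \<le> W"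
  shows "(norm (A *v u))\<^sup>2 \<le> (1 / cos \<alpha>)\<^sup>2 * Re (cinner (A *v u) u) * W"
proof (cases "A *v u = 0")
  case True
  then show ?thesis
    using Pi_sa_form_nonneg[OF A, of u] \<open>0 \<le> W\<close> by simp
next
  case False
  define y where "y = A *v u"
  have "(norm y)\<^sup>2 \<le> cmod (cinner (A *v u) y)"
    using complex_Re_le_cmod[of "cinner (A *v u) y"] by (simp add: y_def cinner_self)
  then have "((norm y)\<^sup>2)\<^sup>2 \<le> (cmod (cinner (A *v u) y))\<^sup>2"
    by (intro power_mono) auto
  also have "\<dots> \<le> (1 / cos \<alpha>)\<^sup>2 * (Re (cinner (A *v u) u) * Re (cinner (A *v y) y))"
    using Pi_sa_cauchy_schwarz[OF assms(1-3)] .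
  also have "\<dots> \<le> (1 / cos \<alpha>)\<^sup>2 * (Re (cinner (A *v u) u) * (W * (norm y)\<^sup>2))"
    using complex_Re_le_cmod[of "cinner (A *v y) y"] W[of y] Pi_sa_form_nonneg[OF A, of u]
    by (intro mult_left_mono) auto
  finally have "(norm y)\<^sup>2 * (norm y)\<^sup>2 \<le> ((1 / cos \<alpha>)\<^sup>2 * Re (cinner (A *v u) u) * W) * (norm y)\<^sup>2"
    by (simp add: power2_eq_square mult_ac)
  then show ?thesis
    unfolding y_def by (rule mult_right_le_imp_le) (use False in simp)
qed

lemma Pi_sa_inverse_form_ge:
  assumes A: "A \<in> Pi_sa \<alpha>" and "0 \<le> \<alpha>" "\<alpha> < pi / 2"
    and W: "\<And>x. cmod (cinner (A *v x) x) \<le> W * (norm x)\<^sup>2" and "0 < W"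
  shows "(cos \<alpha>)\<^sup>2 * (norm y)\<^sup>2 / W \<le> Re (cinner (matrix_inv A *v y) y)"
proof -
  define u where "u = matrix_inv A *v y"
  have Au: "A *v u = y"
    unfolding u_def by (rule matrix_vector_mul_matrix_inv[OF Pi_sa_invertible[OF A]])
  have "cinner u y = cnj (cinner (A *v u) u)"
    using cnj_cinner[of "A *v u" u] Au by simp
  then have "Re (cinner (matrix_inv A *v y) y) = Re (cinner (A *v u) u)"
    unfolding u_def[symmetric] by simp
  moreover have "(norm y)\<^sup>2 \<le> (1 / cos \<alpha>)\<^sup>2 * Re (cinner (A *v u) u) * W"
    using Pi_sa_norm_sq_le[OF assms(1-4) less_imp_le[OF \<open>0 < W\<close>], of u] Au by simp
  moreover have "0 < cos \<alpha>"
    using assms by (intro cos_gt_zero_pi) auto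
  ultimately show ?thesis
    using \<open>0 < W\<close> by (simp add: field_simps power2_eq_square)
qed

lemma coercive_matrix_inverse_norm_le:
  fixes N :: "complex^'n^'n"
  assumes "0 < c" and coercive: "\<And>y. c * (norm y)\<^sup>2 \<le> Re (cinner (N *v y) y)"
  shows "norm (matrix_inv N *v x) \<le> norm x / c"
proof -
  have "invertible N"
  proof (rule invertible_if_ker_zero)
    fix y
    assume "N *v y = 0"
    then show "y = 0"
      using coercive[of y] \<open>0 < c\<close> by (simp add: mult_le_0_iff)
  qed
  define y where "y = matrix_inv N *v x"
  have "c * (norm y)\<^sup>2 \<le> norm x * norm y"
    using coercive[of y] complex_Re_le_cmod[of "cinner x y"] norm_cinner_le[of x y]
    by (simp add: y_def matrix_vector_mul_matrix_inv[OF \<open>invertible N\<close>])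
  then have "c * norm y \<le> norm x"
    by (cases "norm y = 0") (auto simp: power2_eq_square)
  then show ?thesis
    unfolding y_def[symmetric] using \<open>0 < c\<close> by (simp add: pos_le_divide_eq mult.commute)
qed

lemma resolvent_norm_le:
  assumes A: "A \<in> Pi_sa \<alpha>" and B: "B \<in> Pi_sa \<alpha>" and \<alpha>: "0 \<le> \<alpha>" "\<alpha> < pi / 2"
    and WA: "\<And>x. cmod (cinner (A *v x) x) \<le> WA * (norm x)\<^sup>2" and "0 < WA"
    and WB: "\<And>x. cmod (cinner (B *v x) x) \<le> WB * (norm x)\<^sup>2" and "0 < WB"
    and "0 \<le> l"
  shows "norm (matrix_inv (matrix_inv A + l *\<^sub>R matrix_inv B) *v x)
           \<le> (1 / cos \<alpha>)\<^sup>2 * (WA * WB / (WB + l * WA)) * norm x"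
proof -
  define c where "c = (cos \<alpha>)\<^sup>2 * (1 / WA + l / WB)"
  have "0 < cos \<alpha>"
    using \<alpha> by (intro cos_gt_zero_pi) auto
  have "c * (norm y)\<^sup>2 \<le> Re (cinner ((matrix_inv A + l *\<^sub>R matrix_inv B) *v y) y)" for y
  proof -
    have "l * ((cos \<alpha>)\<^sup>2 * (norm y)\<^sup>2 / WB) \<le> l * Re (cinner (matrix_inv B *v y) y)"
      using Pi_sa_inverse_form_ge[OF B \<alpha> WB \<open>0 < WB\<close>] \<open>0 \<le> l\<close> by (rule mult_left_mono)
    moreover have "c * (norm y)\<^sup>2 = (cos \<alpha>)\<^sup>2 * (norm y)\<^sup>2 / WA + l * ((cos \<alpha>)\<^sup>2 * (norm y)\<^sup>2 / WB)"
      by (simp add: c_def algebra_simps)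
    moreover have "Re (cinner ((matrix_inv A + l *\<^sub>R matrix_inv B) *v y) y)
        = Re (cinner (matrix_inv A *v y) y) + l * Re (cinner (matrix_inv B *v y) y)"
      by (simp add: matrix_vector_mult_add_rdistrib scaleR_matrix_vector_mult cinner_add_left
          cinner_scaleR_left)
    ultimately show ?thesis
      using Pi_sa_inverse_form_ge[OF A \<alpha> WA \<open>0 < WA\<close>, of y] by linarith
  qed
  moreover have "0 < c"
    using \<open>0 < cos \<alpha>\<close> \<open>0 < WA\<close> \<open>0 < WB\<close> \<open>0 \<le> l\<close> by (simp add: c_def add_pos_nonneg)
  moreover have "norm x / c = (1 / cos \<alpha>)\<^sup>2 * (WA * WB / (WB + l * WA)) * norm x"
    using \<open>0 < cos \<alpha>\<close> \<open>0 < WA\<close> \<open>0 < WB\<close> \<open>0 \<le> l\<close>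
    by (simp add: c_def field_simps power2_eq_square)
  ultimately show ?thesis
    using coercive_matrix_inverse_norm_le[of c "matrix_inv A + l *\<^sub>R matrix_inv B" x] by simp
qed

section \<open>The weighted geometric mean\<close>

lemma bounded_linear_matrix_form: "bounded_linear (\<lambda>M :: complex^'n^'n. cinner (M *v x) y)"
proof -
  have "linear (\<lambda>M :: complex^'n^'n. cinner (M *v x) y)"
  proof (rule linearI)
    show "cinner ((M + M') *v x) y = cinner (M *v x) y + cinner (M' *v x) y"
      for M M' :: "complex^'n^'n"
      by (simp add: matrix_vector_mult_add_rdistrib cinner_add_left)
    show "cinner ((r *\<^sub>R M) *v x) y = r *\<^sub>R cinner (M *v x) y" for r and M :: "complex^'n^'n"
      by (simp only: scaleR_matrix_vector_mult cinner_scaleR_left) (simp add: scaleR_conv_of_real)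
  qed
  then show ?thesis
    using linear_conv_bounded_linear by blast
qed

lemma norm_bounded_linear_integral_le:
  fixes f :: "'a::euclidean_space \<Rightarrow> 'b::euclidean_space" and \<Phi> :: "'b \<Rightarrow> 'c::euclidean_space"
  assumes \<Phi>: "bounded_linear \<Phi>" and g: "g integrable_on S"
    and bound: "\<And>x. x \<in> S \<Longrightarrow> norm (\<Phi> (f x)) \<le> g x"
  shows "norm (\<Phi> (integral S f)) \<le> integral S g"
proof (cases "f integrable_on S")
  case True
  then have "\<Phi> (integral S f) = integral S (\<Phi> \<circ> f)"
    using integral_linear[OF True \<Phi>] by simp
  also have "norm \<dots> \<le> integral S g"
    using integrable_linear[OF True \<Phi>] g bound by (intro integral_norm_bound_integral) auto
  finally show ?thesis .
next
  case False
  have "0 \<le> integral S g"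
    using g bound norm_ge_zero order_trans by (intro integral_nonneg) blast+
  then show ?thesis
    using False linear_0[OF bounded_linear.linear[OF \<Phi>]] by (simp add: not_integrable_integral)
qed

lemma resolvent_integral_form_le:
  assumes A: "A \<in> Pi_sa \<alpha>" and B: "B \<in> Pi_sa \<alpha>" and \<alpha>: "0 \<le> \<alpha>" "\<alpha> < pi / 2"
    and WA: "\<And>x. cmod (cinner (A *v x) x) \<le> WA * (norm x)\<^sup>2" and "0 < WA"
    and WB: "\<And>x. cmod (cinner (B *v x) x) \<le> WB * (norm x)\<^sup>2" and "0 < WB"
    and s: "0 < s" "s < 1"
  defines "I \<equiv> integral {0<..} (\<lambda>l. l powr (s - 1) *\<^sub>R matrix_inv (matrix_inv A + l *\<^sub>R matrix_inv B))"
  shows "cmod (cinner (I *v x) y)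
           \<le> pi / sin (s * pi) * (WA powr (1 - s) * WB powr s) * ((1 / cos \<alpha>)\<^sup>2 * (norm x * norm y))"
proof -
  define C where "C = (1 / cos \<alpha>)\<^sup>2 * (norm x * norm y)"
  define g where "g l = l powr (s - 1) * (WA * WB / (WB + l * WA)) * C" for l :: real
  have g_int: "(g has_integral (pi / sin (s * pi) * (WA powr (1 - s) * WB powr s)) * C) {0<..}"
    unfolding g_def using has_integral_powr_resolvent[OF s \<open>0 < WA\<close> \<open>0 < WB\<close>]
    by (rule has_integral_mult_left)
  have "cmod (cinner (I *v x) y) \<le> integral {0<..} g"
    unfolding I_def
  proof (rule norm_bounded_linear_integral_le[OF bounded_linear_matrix_form
        has_integral_integrable[OF g_int]])
    fix l :: real
    assume "l \<in> {0<..}"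
    define M where "M = matrix_inv (matrix_inv A + l *\<^sub>R matrix_inv B)"
    have "cmod (cinner ((l powr (s - 1) *\<^sub>R M) *v x) y) = l powr (s - 1) * cmod (cinner (M *v x) y)"
      by (simp add: scaleR_matrix_vector_mult cinner_scaleR_left norm_mult)
    also have "\<dots> \<le> l powr (s - 1) * (norm (M *v x) * norm y)"
      by (intro mult_left_mono norm_cinner_le) auto
    also have "\<dots> \<le> l powr (s - 1) * (((1 / cos \<alpha>)\<^sup>2 * (WA * WB / (WB + l * WA)) * norm x) * norm y)"
      unfolding M_def using \<open>l \<in> {0<..}\<close>
      by (intro mult_left_mono mult_right_mono resolvent_norm_le[OF A B \<alpha> WA \<open>0 < WA\<close> WB \<open>0 < WB\<close>]) auto
    also have "\<dots> = g l"
      by (simp add: g_def C_def)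
    finally show "cmod (cinner ((l powr (s - 1) *\<^sub>R M) *v x) y) \<le> g l" .
  qed
  also have "\<dots> = (pi / sin (s * pi) * (WA powr (1 - s) * WB powr s)) * C"
    using g_int by (rule integral_unique)
  finally show ?thesis
    by (simp add: C_def)
qed

lemma wgmean_form_le:
  assumes A: "A \<in> Pi_sa \<alpha>" and B: "B \<in> Pi_sa \<alpha>" and \<alpha>: "0 \<le> \<alpha>" "\<alpha> < pi / 2"
    and WA: "\<And>x. cmod (cinner (A *v x) x) \<le> WA * (norm x)\<^sup>2" and "0 < WA"
    and WB: "\<And>x. cmod (cinner (B *v x) x) \<le> WB * (norm x)\<^sup>2" and "0 < WB"
    and s: "0 < s" "s < 1"
  shows "cmod (cinner (wgmean s A B *v x) y)
           \<le> (1 / cos \<alpha>)\<^sup>2 * (WA powr (1 - s) * WB powr s) * (norm x * norm y)"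
proof -
  define I where
    "I = integral {0<..} (\<lambda>l. l powr (s - 1) *\<^sub>R matrix_inv (matrix_inv A + l *\<^sub>R matrix_inv B))"
  have "0 < sin (s * pi)"
    using s by (intro sin_gt_zero) auto
  have "cinner (wgmean s A B *v x) y = of_real (sin (s * pi) / pi) * cinner (I *v x) y"
    by (simp add: wgmean_def I_def scaleR_matrix_vector_mult cinner_scaleR_left)
  then have "cmod (cinner (wgmean s A B *v x) y) = sin (s * pi) / pi * cmod (cinner (I *v x) y)"
    using \<open>0 < sin (s * pi)\<close> by (simp add: norm_mult norm_divide)
  also have "\<dots> \<le> sin (s * pi) / pi * (pi / sin (s * pi) * (WA powr (1 - s) * WB powr s)
      * ((1 / cos \<alpha>)\<^sup>2 * (norm x * norm y)))"
    using resolvent_integral_form_le[OF assms, of x y] \<open>0 < sin (s * pi)\<close>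
    by (intro mult_left_mono) (auto simp: I_def)
  finally show ?thesis
    using \<open>0 < sin (s * pi)\<close> by (simp add: mult_ac)
qed

lemma q_numrad_le:
  fixes M :: "complex^'n^'n"
  assumes "\<exists>x y :: complex^'n. norm x = 1 \<and> norm y = 1 \<and> cinner x y = q"
    and "\<And>x y. norm x = 1 \<Longrightarrow> norm y = 1 \<Longrightarrow> cinner x y = q \<Longrightarrow> cmod (cinner (M *v x) y) \<le> R"
  shows "q_numrad q M \<le> R"
proof -
  define S where "S = {cmod (cinner (M *v x) y) |x y. norm x = 1 \<and> norm y = 1 \<and> cinner x y = q}"
  obtain x y :: "complex^'n" where "norm x = 1" "norm y = 1" "cinner x y = q"
    using assms(1) by blast
  then have "cmod (cinner (M *v x) y) \<in> S"
    unfolding S_def by (intro CollectI exI[of _ x] exI[of _ y]) simp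
  moreover have "r \<le> R" if "r \<in> S" for r
    using that assms(2) unfolding S_def by auto
  ultimately show ?thesis
    unfolding q_numrad_def S_def[symmetric] by (intro cSup_least) auto
qed

lemma norm_form_le_q_numrad:
  fixes M :: "complex^'n^'n"
  assumes "norm x = 1" "norm y = 1" "cinner x y = q"
  shows "cmod (cinner (M *v x) y) \<le> q_numrad q M"
proof -
  obtain K where K: "\<And>x. norm (M *v x) \<le> norm x * K"
    using bounded_linear.bounded[OF matrix_vector_mul_bounded_linear[of M]] by blast
  have "cmod (cinner (M *v x) y) \<le> K" if "norm x = 1" "norm y = 1" for x y
    using norm_cinner_le[of "M *v x" y] K[of x] that by simp
  then have "bdd_above {cmod (cinner (M *v x) y) | x y. norm x = 1 \<and> norm y = 1 \<and> cinner x y = q}"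
    by (intro bdd_aboveI[of _ K]) auto
  then show ?thesis
    unfolding q_numrad_def using assms by (intro cSup_upper) auto
qed

lemma exists_orthogonal_unit:
  assumes "CARD('n::finite) \<ge> 2" and "norm (v :: complex^'n) = 1"
  shows "\<exists>z :: complex^'n. norm z = 1 \<and> cinner v z = 0"
proof -
  obtain i j :: 'n where "i \<noteq> j"
    using assms(1) card_le_Suc0_iff_eq[of "UNIV :: 'n set"] by auto
  txt \<open>w k is the part of the k-th unit vector orthogonal to v; w i = w j = 0 would force
    |v_i| = |v_j| = 1 and conj v_j v_i = 0.\<close>
  define w where "w k = axis k 1 - cnj (v $ k) *s v" for k
  have "cinner v (w k) = 0" for k
    using assms(2) cnj_cinner[of "axis k 1" v]
    by (simp add: w_def cinner_diff_right cinner_scale_right cinner_axis_left cinner_self)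
  moreover have "w i \<noteq> 0 \<or> w j \<noteq> 0"
  proof (rule ccontr)
    assume "\<not> ?thesis"
    then have "(w i) $ i = 0" "(w j) $ i = 0" "(w j) $ j = 0"
      by simp_all
    then show False
      using \<open>i \<noteq> j\<close> by (auto simp: w_def axis_def)
  qed
  ultimately obtain k where "w k \<noteq> 0" "cinner v (w k) = 0"
    by blast
  then show ?thesis
    by (intro exI[of _ "(1 / norm (w k)) *\<^sub>R w k"]) (simp add: cinner_scaleR_right)
qed

lemma norm_orthonormal_combination:
  assumes "norm v = 1" "norm z = 1" "cinner v z = 0"
  shows "(norm (a *s v + b *s z))\<^sup>2 = (cmod a)\<^sup>2 + (cmod b)\<^sup>2"
proof -
  have "cinner z v = 0"
    using assms(3) cnj_cinner[of v z] by simp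
  then have "cinner (a *s v + b *s z) (a *s v + b *s z)
      = a * cnj a * cinner v v + b * cnj b * cinner z z"
    using assms(3) by (simp add: cinner_add_left cinner_add_right cinner_scale_left cinner_scale_right)
  then have "complex_of_real ((norm (a *s v + b *s z))\<^sup>2) = complex_of_real ((cmod a)\<^sup>2 + (cmod b)\<^sup>2)"
    using assms(1,2) by (simp add: cinner_self flip: complex_norm_square)
  then show ?thesis
    by (simp only: of_real_eq_iff)
qed

lemma unit_vector_with_cinner:
  assumes v: "norm v = 1" and z: "norm z = 1" and vz: "cinner v z = 0"
    and "cmod q \<le> 1" and "\<bar>\<sigma>\<bar> = 1"
  defines "y \<equiv> cnj q *s v + complex_of_real (\<sigma> * sqrt (1 - (cmod q)\<^sup>2)) *s z"
  shows "norm y = 1" and "cinner v y = q"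
proof -
  have "(cmod q)\<^sup>2 \<le> 1"
    using \<open>cmod q \<le> 1\<close> by (simp add: power_le_one)
  then have "(norm y)\<^sup>2 = 1"
    using \<open>\<bar>\<sigma>\<bar> = 1\<close> unfolding y_def norm_orthonormal_combination[OF v z vz]
    by (simp add: norm_mult power_mult_distrib)
  then show "norm y = 1"
    using norm_ge_zero[of y] by (auto simp: power2_eq_1_iff)
  show "cinner v y = q"
    using v vz by (simp add: y_def cinner_add_right cinner_scale_right cinner_self)
qed

lemma exists_unit_pair_cinner:
  assumes "CARD('n::finite) \<ge> 2" and "cmod q \<le> 1"
  shows "\<exists>x y :: complex^'n. norm x = 1 \<and> norm y = 1 \<and> cinner x y = q"
proof -
  fix i :: 'n
  obtain z :: "complex^'n" where z: "norm z = 1" "cinner (axis i 1) z = 0"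
    using exists_orthogonal_unit[OF assms(1) norm_axis_1_complex] by blast
  show ?thesis
    using unit_vector_with_cinner[OF norm_axis_1_complex z assms(2), where \<sigma> = 1] norm_axis_1_complex
    by (intro exI[of _ "axis i 1"]
        exI[of _ "cnj q *s axis i 1 + complex_of_real (sqrt (1 - (cmod q)\<^sup>2)) *s z"]) auto
qed

lemma q_numrad_diag_ge:
  fixes M :: "complex^'n^'n"
  assumes "CARD('n) \<ge> 2" and "cmod q \<le> 1" and v: "norm v = 1"
  shows "cmod q * cmod (cinner (M *v v) v) \<le> q_numrad q M"
proof -
  obtain z where z: "norm z = 1" "cinner v z = 0"
    using exists_orthogonal_unit[OF assms(1) v] by blast
  define r where "r = sqrt (1 - (cmod q)\<^sup>2)"
  define y where "y \<sigma> = cnj q *s v + complex_of_real (\<sigma> * r) *s z" for \<sigma> :: real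
  have bound:
    "cmod (q * cinner (M *v v) v + complex_of_real (\<sigma> * r) * cinner (M *v v) z) \<le> q_numrad q M"
    if "\<bar>\<sigma>\<bar> = 1" for \<sigma>
  proof -
    have "cmod (cinner (M *v v) (y \<sigma>)) \<le> q_numrad q M"
      using unit_vector_with_cinner[OF v z assms(2) that]
      by (intro norm_form_le_q_numrad[OF v]) (simp_all add: y_def r_def)
    then show ?thesis
      by (simp add: y_def cinner_add_right cinner_scale_right)
  qed
  txt \<open>The unit vectors y 1 and y (-1) both have inner product q with v, and the values of
    the form at them average to q <Mv, v>.\<close>
  define a where "a = q * cinner (M *v v) v"
  define b where "b = complex_of_real r * cinner (M *v v) z"
  have "cmod (a + b) \<le> q_numrad q M" "cmod (a - b) \<le> q_numrad q M"
    using bound[of 1] bound[of "-1"] by (simp_all add: a_def b_def)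
  moreover have "2 * cmod a \<le> cmod (a + b) + cmod (a - b)"
    using norm_triangle_ineq[of "a + b" "a - b"] by (simp add: norm_mult)
  ultimately show ?thesis
    by (simp add: a_def norm_mult)
qed

lemma norm_form_self_le_q_numrad:
  fixes M :: "complex^'n^'n"
  assumes "CARD('n) \<ge> 2" and "0 < cmod q" "cmod q \<le> 1"
  shows "cmod (cinner (M *v x) x) \<le> q_numrad q M / cmod q * (norm x)\<^sup>2"
proof (cases "x = 0")
  case False
  define r where "r = 1 / norm x"
  have "norm (r *\<^sub>R x) = 1" "r * r * (norm x)\<^sup>2 = 1"
    using False by (simp_all add: r_def power2_eq_square)
  have "cmod q * (r * r * cmod (cinner (M *v x) x)) \<le> q_numrad q M"
    using q_numrad_diag_ge[OF assms(1,3) \<open>norm (r *\<^sub>R x) = 1\<close>, of M]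
    by (simp add: matrix_form_scaleR norm_mult)
  then have "r * r * cmod (cinner (M *v x) x) \<le> q_numrad q M / cmod q"
    using \<open>0 < cmod q\<close> by (simp add: pos_le_divide_eq mult.commute)
  then have "(r * r * cmod (cinner (M *v x) x)) * (norm x)\<^sup>2 \<le> q_numrad q M / cmod q * (norm x)\<^sup>2"
    by (rule mult_right_mono) simp
  also have "(r * r * cmod (cinner (M *v x) x)) * (norm x)\<^sup>2 = cmod (cinner (M *v x) x)"
    using \<open>r * r * (norm x)\<^sup>2 = 1\<close> by (simp add: algebra_simps)
  finally show ?thesis .
qed simp

lemma q_numrad_pos:
  fixes A :: "complex^'n^'n"
  assumes "A \<in> Pi_sa \<alpha>" and "CARD('n) \<ge> 2" and "0 < cmod q" "cmod q \<le> 1"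
  shows "0 < q_numrad q A"
proof -
  fix i :: 'n
  have "0 < Re (cinner (A *v axis i 1) (axis i 1))"
    using Pi_sa_form_pos[OF assms(1)] norm_axis_1_complex[of i] by force
  then have "0 < cmod (cinner (A *v axis i 1) (axis i 1))"
    using complex_Re_le_cmod by (rule order.strict_trans2)
  then have "0 < cmod q * cmod (cinner (A *v axis i 1) (axis i 1))"
    using \<open>0 < cmod q\<close> by simp
  also have "\<dots> \<le> q_numrad q A"
    using q_numrad_diag_ge[OF assms(2,4) norm_axis_1_complex] .
  finally show ?thesis .
qed

section \<open>Logarithmic and Heinz means\<close>

lemma weighted_geometric_mean_divide:
  fixes a b c s :: real
  assumes "0 < a" "0 < b" "0 < c"
  shows "(a / c) powr (1 - s) * (b / c) powr s = a powr (1 - s) * b powr s / c"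
proof -
  have "c powr (1 - s) * c powr s = c"
    using assms by (simp flip: powr_add)
  then show ?thesis
    using assms by (simp add: powr_divide)
qed

lemma wgmean_form_le_q_numrad:
  fixes A B :: "complex^'n^'n"
  assumes A: "A \<in> Pi_sa \<alpha>" and B: "B \<in> Pi_sa \<alpha>" and \<alpha>: "0 \<le> \<alpha>" "\<alpha> < pi / 2"
    and n: "CARD('n) \<ge> 2" and q: "0 < cmod q" "cmod q \<le> 1"
    and "s \<in> {0..1}" and "norm x = 1" "norm y = 1"
  shows "cmod (cinner (wgmean s A B *v x) y)
           \<le> (1 / cos \<alpha>)\<^sup>2 / cmod q * (q_numrad q A powr (1 - s) * q_numrad q B powr s)"
proof (cases "s = 0 \<or> s = 1")
  txt \<open>At the endpoints the factor sin (s pi) of the integral representation vanishes, so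
    wgmean gives 0 there rather than A resp. B.\<close>
  case True
  then have "wgmean s A B = 0"
    by (auto simp: wgmean_def)
  then show ?thesis
    using q by simp
next
  case False
  then have s: "0 < s" "s < 1"
    using \<open>s \<in> {0..1}\<close> by auto
  have "0 < q_numrad q A" "0 < q_numrad q B"
    using q_numrad_pos[OF A n q] q_numrad_pos[OF B n q] .
  with q have "cmod (cinner (wgmean s A B *v x) y)
      \<le> (1 / cos \<alpha>)\<^sup>2 * ((q_numrad q A / cmod q) powr (1 - s) * (q_numrad q B / cmod q) powr s)"
    using wgmean_form_le[OF A B \<alpha> norm_form_self_le_q_numrad[OF n q] _
        norm_form_self_le_q_numrad[OF n q] _ s, where x = x and y = y]
      \<open>norm x = 1\<close> \<open>norm y = 1\<close> by simp
  with \<open>0 < q_numrad q A\<close> \<open>0 < q_numrad q B\<close> q show ?thesis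
    by (simp add: weighted_geometric_mean_divide)
qed

lemma q_numrad_log_mean_le:
  fixes A B :: "complex^'n^'n"
  assumes A: "A \<in> Pi_sa \<alpha>" and B: "B \<in> Pi_sa \<alpha>" and \<alpha>: "0 \<le> \<alpha>" "\<alpha> < pi / 2"
    and n: "CARD('n) \<ge> 2" and q: "0 < cmod q" "cmod q \<le> 1"
  shows "q_numrad q (log_mean A B)
           \<le> (1 / cos \<alpha>)\<^sup>2 / cmod q * log_mean_real (q_numrad q A) (q_numrad q B)"
proof (rule q_numrad_le[OF exists_unit_pair_cinner[OF n q(2)]])
  fix x y :: "complex^'n"
  assume xy: "norm x = 1" "norm y = 1" "cinner x y = q"
  define K where "K = (1 / cos \<alpha>)\<^sup>2 / cmod q"
  define E where "E s = q_numrad q A powr (1 - s) * q_numrad q B powr s" for s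
  have "continuous_on {0..1} E"
    using q_numrad_pos[OF A n q] q_numrad_pos[OF B n q] unfolding E_def
    by (intro continuous_intros) auto
  then have "(\<lambda>s. K * E s) integrable_on {0..1}"
    by (intro integrable_on_mult_right integrable_continuous_interval)
  then have "cmod (cinner (integral {0..1} (\<lambda>s. wgmean s A B) *v x) y) \<le> integral {0..1} (\<lambda>s. K * E s)"
    using wgmean_form_le_q_numrad[OF A B \<alpha> n q _ xy(1,2)]
    by (intro norm_bounded_linear_integral_le[OF bounded_linear_matrix_form])
      (simp_all add: K_def E_def)
  then show "cmod (cinner (log_mean A B *v x) y) \<le> K * log_mean_real (q_numrad q A) (q_numrad q B)"
    by (simp add: log_mean_def log_mean_real_def E_def)
qed

lemma q_numrad_heinz_mean_le:
  fixes A B :: "complex^'n^'n"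
  assumes A: "A \<in> Pi_sa \<alpha>" and B: "B \<in> Pi_sa \<alpha>" and \<alpha>: "0 \<le> \<alpha>" "\<alpha> < pi / 2"
    and n: "CARD('n) \<ge> 2" and q: "0 < cmod q" "cmod q \<le> 1" and "0 \<le> t" "t \<le> 1"
  shows "q_numrad q (heinz_mean t A B)
           \<le> (1 / cos \<alpha>)\<^sup>2 / cmod q * heinz_mean_real t (q_numrad q A) (q_numrad q B)"
proof (rule q_numrad_le[OF exists_unit_pair_cinner[OF n q(2)]])
  fix x y :: "complex^'n"
  assume xy: "norm x = 1" "norm y = 1" "cinner x y = q"
  define u where "u = cinner (wgmean t A B *v x) y"
  define v where "v = cinner (wgmean (1 - t) A B *v x) y"
  have "cinner (heinz_mean t A B *v x) y = (u + v) / 2"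
    by (simp add: u_def v_def heinz_mean_def scaleR_matrix_vector_mult cinner_scaleR_left
        matrix_vector_mult_add_rdistrib cinner_add_left)
  then have "cmod (cinner (heinz_mean t A B *v x) y) = cmod (u + v) / 2"
    by (simp only: norm_divide) simp
  also have "\<dots> \<le> (cmod u + cmod v) / 2"
    by (simp add: divide_right_mono norm_triangle_ineq)
  also have "\<dots> \<le> ((1 / cos \<alpha>)\<^sup>2 / cmod q * (q_numrad q A powr (1 - t) * q_numrad q B powr t)
      + (1 / cos \<alpha>)\<^sup>2 / cmod q * (q_numrad q A powr (1 - (1 - t)) * q_numrad q B powr (1 - t))) / 2"
    unfolding u_def v_def using \<open>0 \<le> t\<close> \<open>t \<le> 1\<close>
    by (intro divide_right_mono add_mono wgmean_form_le_q_numrad[OF A B \<alpha> n q _ xy(1,2)]) auto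
  also have "\<dots> = (1 / cos \<alpha>)\<^sup>2 / cmod q * heinz_mean_real t (q_numrad q A) (q_numrad q B)"
    by (simp add: heinz_mean_real_def algebra_simps add_divide_distrib)
  finally show "cmod (cinner (heinz_mean t A B *v x) y)
      \<le> (1 / cos \<alpha>)\<^sup>2 / cmod q * heinz_mean_real t (q_numrad q A) (q_numrad q B)" .
qed

lemma log_mean_real_nonneg: "0 \<le> log_mean_real a b"
  unfolding log_mean_real_def
  by (cases "(\<lambda>s. a powr (1 - s) * b powr s) integrable_on {0..1}")
    (simp_all add: integral_nonneg not_integrable_integral)

lemma heinz_mean_real_nonneg: "0 \<le> heinz_mean_real t a b"
  by (simp add: heinz_mean_real_def)

lemma power2_mult_le_power3_mult:
  fixes c S L Q :: real
  assumes "0 < c" "c \<le> 1" "1 \<le> S" "0 \<le> L" "Q \<le> S\<^sup>2 / c * L"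
  shows "c\<^sup>2 * Q \<le> S ^ 3 * L"
proof -
  have "c\<^sup>2 * Q \<le> c * (S\<^sup>2 * L)"
    using mult_left_mono[OF assms(5), of "c\<^sup>2"] assms(1) by (simp add: power2_eq_square)
  also have "\<dots> \<le> 1 * (S\<^sup>2 * L)"
    using assms(2,4) by (intro mult_right_mono) auto
  also have "\<dots> \<le> S * (S\<^sup>2 * L)"
    using assms(3,4) by (intro mult_right_mono) auto
  finally show ?thesis
    by (simp add: power3_eq_cube power2_eq_square)
qed

theorem mainTheorem12:
  fixes A B :: "complex^'n^'n" and q :: complex and \<alpha> t :: real
  assumes "CARD('n) \<ge> 2"
    and "0 \<le> \<alpha>" and "\<alpha> < pi / 2"
    and "A \<in> Pi_sa \<alpha>" and "B \<in> Pi_sa \<alpha>"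
    and "0 < cmod q" and "cmod q \<le> 1"
    and "0 < t" and "t < 1"
  shows "(cmod q)^2 * q_numrad q (log_mean A B)
           \<le> (1 / cos \<alpha>)^3 * log_mean_real (q_numrad q A) (q_numrad q B) \<and>
         (cmod q)^2 * q_numrad q (heinz_mean t A B)
           \<le> (1 / cos \<alpha>)^3 * heinz_mean_real t (q_numrad q A) (q_numrad q B)"
proof -
  have "0 < cos \<alpha>"
    using assms(2,3) by (intro cos_gt_zero_pi) auto
  then have "1 \<le> 1 / cos \<alpha>"
    by (simp add: field_simps)
  then show ?thesis
    using power2_mult_le_power3_mult[OF assms(6,7) _ log_mean_real_nonneg
        q_numrad_log_mean_le[OF assms(4,5,2,3,1,6,7)]]
      power2_mult_le_power3_mult[OF assms(6,7) _ heinz_mean_real_nonneg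
        q_numrad_heinz_mean_le[OF assms(4,5,2,3,1,6,7)]] assms(8,9)
    by simp
qed

end
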